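(* Let $\alpha>0$, let $X_{0-}$ be a real-valued random variable and let $Z$ be a continuous stochastic process with $Z_0=0$, independent of $X_{0-}$, satisfying the crossing property (see context). Let $\underline{\Lambda}$ be the minimal solution of the McKean--Vlasov problem and, for $\Delta>0$, let $\underline{\Lambda}^{\Delta}$ be the minimal solution of the discretized McKean--Vlasov problem (see context). Choose a sequence $\Delta_n>0$ such that the discretizations are nested, i.e. $\Delta_n\mathbb{N}\subseteq \Delta_{n+1}\mathbb{N}$ for all $n\in\mathbb{N}$, and $\lim_{n\to\infty}\Delta_n=0$. Assume in addition that either $\operatorname{law}(X_{0-})$ is atomless or $\operatorname{law}(Z_t)$ is atomless for every $t>0$. Then $\lim_{n\to\infty}\underline{\Lambda}^{\Delta_n}=\underline{\Lambda}$ in $M$, i.e. $\alpha^{-1}\underline{\Lambda}^{\Delta_n}_t\to\alpha^{-1}\underline{\Lambda}_t$ for every $t\in[0,\infty]$ at which $\underline{\Lambda}$ is continuous.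
   Context: Crossing property: for every stopping time $\tau$ with respect to the natural filtration of $X_{0-}+Z$ and every $h>0$, $\mathbb{P}(\tau<\infty,\ \inf_{0\le s\le h}(Z_{\tau+s}-Z_\tau)=0)=0$. $M$ denotes the set of càdlàg increasing functions $\ell:\overline{\mathbb{R}}\to[0,1]$ (on the two-point compactification of $\mathbb{R}$) with $\ell_{0-}=0$ and $\ell_\infty=1$, topologized by: $\ell^n\to\ell$ iff $\ell^n_t\to\ell_t$ for every $t\in[0,\infty]$ that is not a discontinuity point of $\ell$. McKean--Vlasov problem: a deterministic function $\Lambda$ is a solution if, with $X_t=X_{0-}+Z_t-\Lambda_t$ and $\tau=\inf\{t\ge0: X_t\le 0\}$, one has $\Lambda_t=\alpha\,\mathbb{P}(\tau\le t)$ for all $t\ge0$; a solution $\underline{\Lambda}$ is minimal if $\underline{\Lambda}_t\le\Lambda_t$ for all $t\ge 0$ and every solution $\Lambda$ (a unique minimal solution exists). For $\Delta>0$ and an increasing function $\ell$ define $X^\Delta_t[\ell]=X_{0-}+Z_{\Delta\lfloor t/\Delta\rfloor}-\alpha\ell_{\Delta\lfloor t/\Delta\rfloor}$, $\tau^\Delta[\ell]=\inf\{t\ge0:X^\Delta_t[\ell]\le0\}$, $\Gamma_\Delta[\ell]_t=\mathbb{P}(\tau^\Delta[\ell]\le t)$. $\Lambda^\Delta$ solves the discretized McKean--Vlasov problem if $\alpha\Gamma_\Delta[\alpha^{-1}\Lambda^\Delta]=\Lambda^\Delta$; a solution $\underline{\Lambda}^\Delta$ is minimal if $\underline{\Lambda}^\Delta\le\Lambda^\Delta$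 for every solution $\Lambda^\Delta$ (under the stated atomless assumption such a minimal solution exists). *)

theory Defs
  imports "HOL-Probability.Probability"
begin

definition hit_time :: "(real \<Rightarrow> real) \<Rightarrow> ereal" where
  "hit_time f = Inf (ereal ` {t. 0 \<le> t \<and> f t \<le> 0})"

definition natural_filtration :: "'a measure \<Rightarrow> (real \<Rightarrow> 'a \<Rightarrow> real) \<Rightarrow> real \<Rightarrow> 'a measure" where
  "natural_filtration M Y t = sigma (space M)
     {Y s -` B \<inter> space M | s B. s \<in> {0..t} \<and> B \<in> sets borel}"

definition is_stopping_time :: "'a measure \<Rightarrow> (real \<Rightarrow> 'a measure) \<Rightarrow> ('a \<Rightarrow> ereal) \<Rightarrow> bool" where
  "is_stopping_time M F \<tau> \<longleftrightarrow>
     (\<forall>\<omega>\<in>space M. 0 \<le> \<tau> \<omega>) \<and>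
     (\<forall>t\<ge>0. {\<omega>\<in>space M. \<tau> \<omega> \<le> ereal t} \<in> sets (F t))"

definition crossing_property :: "'a measure \<Rightarrow> ('a \<Rightarrow> real) \<Rightarrow> (real \<Rightarrow> 'a \<Rightarrow> real) \<Rightarrow> bool" where
  "crossing_property M X0 Z \<longleftrightarrow>
     (\<forall>\<tau>. is_stopping_time M (natural_filtration M (\<lambda>s \<omega>. X0 \<omega> + Z s \<omega>)) \<tau> \<longrightarrow>
       (\<forall>h>0. AE \<omega> in M. \<not> (\<tau> \<omega> < \<infinity> \<and>
          (INF s\<in>{0..h}. Z (real_of_ereal (\<tau> \<omega>) + s) \<omega> - Z (real_of_ereal (\<tau> \<omega>)) \<omega>) = 0)))"

definition MV_solution :: "'a measure \<Rightarrow> ('a \<Rightarrow> real) \<Rightarrow> (real \<Rightarrow> 'a \<Rightarrow> real) \<Rightarrow> real \<Rightarrow> (real \<Rightarrow> real) \<Rightarrow> bool" where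
  "MV_solution M X0 Z \<alpha> \<Lambda> \<longleftrightarrow>
     (\<forall>t\<ge>0. {\<omega>\<in>space M. hit_time (\<lambda>s. X0 \<omega> + Z s \<omega> - \<Lambda> s) \<le> ereal t} \<in> sets M \<and>
       \<Lambda> t = \<alpha> * measure M {\<omega>\<in>space M. hit_time (\<lambda>s. X0 \<omega> + Z s \<omega> - \<Lambda> s) \<le> ereal t})"

definition MV_minimal_solution :: "'a measure \<Rightarrow> ('a \<Rightarrow> real) \<Rightarrow> (real \<Rightarrow> 'a \<Rightarrow> real) \<Rightarrow> real \<Rightarrow> (real \<Rightarrow> real) \<Rightarrow> bool" where
  "MV_minimal_solution M X0 Z \<alpha> \<Lambda> \<longleftrightarrow>
     MV_solution M X0 Z \<alpha> \<Lambda> \<and>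
     (\<forall>\<Lambda>'. MV_solution M X0 Z \<alpha> \<Lambda>' \<longrightarrow> (\<forall>t\<ge>0. \<Lambda> t \<le> \<Lambda>' t))"

definition grid :: "real \<Rightarrow> real \<Rightarrow> real" where
  "grid \<Delta> t = \<Delta> * of_int \<lfloor>t / \<Delta>\<rfloor>"

definition disc_event :: "'a measure \<Rightarrow> ('a \<Rightarrow> real) \<Rightarrow> (real \<Rightarrow> 'a \<Rightarrow> real) \<Rightarrow> real \<Rightarrow> real \<Rightarrow> (real \<Rightarrow> real) \<Rightarrow> real \<Rightarrow> 'a set" where
  "disc_event M X0 Z \<alpha> \<Delta> l t =
     {\<omega>\<in>space M. hit_time (\<lambda>s. X0 \<omega> + Z (grid \<Delta> s) \<omega> - \<alpha> * l (grid \<Delta> s)) \<le> ereal t}"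

definition Gamma_disc :: "'a measure \<Rightarrow> ('a \<Rightarrow> real) \<Rightarrow> (real \<Rightarrow> 'a \<Rightarrow> real) \<Rightarrow> real \<Rightarrow> real \<Rightarrow> (real \<Rightarrow> real) \<Rightarrow> real \<Rightarrow> real" where
  "Gamma_disc M X0 Z \<alpha> \<Delta> l t = measure M (disc_event M X0 Z \<alpha> \<Delta> l t)"

definition MV_disc_solution :: "'a measure \<Rightarrow> ('a \<Rightarrow> real) \<Rightarrow> (real \<Rightarrow> 'a \<Rightarrow> real) \<Rightarrow> real \<Rightarrow> real \<Rightarrow> (real \<Rightarrow> real) \<Rightarrow> bool" where
  "MV_disc_solution M X0 Z \<alpha> \<Delta> \<Lambda> \<longleftrightarrow>
     (\<forall>t\<ge>0. disc_event M X0 Z \<alpha> \<Delta> (\<lambda>s. \<Lambda> s / \<alpha>) t \<in> sets M \<and>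
       \<alpha> * Gamma_disc M X0 Z \<alpha> \<Delta> (\<lambda>s. \<Lambda> s / \<alpha>) t = \<Lambda> t)"

definition MV_disc_minimal_solution :: "'a measure \<Rightarrow> ('a \<Rightarrow> real) \<Rightarrow> (real \<Rightarrow> 'a \<Rightarrow> real) \<Rightarrow> real \<Rightarrow> real \<Rightarrow> (real \<Rightarrow> real) \<Rightarrow> bool" where
  "MV_disc_minimal_solution M X0 Z \<alpha> \<Delta> \<Lambda> \<longleftrightarrow>
     MV_disc_solution M X0 Z \<alpha> \<Delta> \<Lambda> \<and>
     (\<forall>\<Lambda>'. MV_disc_solution M X0 Z \<alpha> \<Delta> \<Lambda>' \<longrightarrow> (\<forall>t\<ge>0. \<Lambda> t \<le> \<Lambda>' t))"

text \<open>Extension of a function on [0,inf) by 0 to the left of 0 (the 0- convention of the space M).\<close>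
definition ext0 :: "(real \<Rightarrow> real) \<Rightarrow> real \<Rightarrow> real" where
  "ext0 f t = (if t < 0 then 0 else f t)"

end

theory Submission
  imports Defs
begin

text \<open>
  The minimal discrete solutions increase along nested grids, because the finer solution is a
  supersolution of the coarser problem, and they stay below the minimal solution \<open>\<Lambda>\<close>, which is a
  supersolution on every grid. Hence they converge to a limit \<open>\<Lambda>lim \<le> \<Lambda>\<close>. The right-continuous
  regularisation of \<open>\<Lambda>lim\<close> is itself a solution of the McKean--Vlasov problem: it dominates the
  loss because every grid hit is a hit of the regularised barrier, and it is dominated by the loss
  because, by the crossing property, a path that hits the barrier immediately dips strictly below
  it, which fine enough grids detect. Minimality of \<open>\<Lambda>\<close> then forces \<open>\<Lambda> = \<Lambda>lim\<close> at continuity points.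
\<close>

section \<open>Grids and hitting times\<close>

lemma grid_eq_nat_floor:
  assumes "\<Delta> > 0" "0 \<le> s"
  shows "grid \<Delta> s = \<Delta> * real (nat \<lfloor>s / \<Delta>\<rfloor>)"
  using assms unfolding grid_def by simp

lemma grid_le: "\<Delta> > 0 \<Longrightarrow> grid \<Delta> s \<le> s"
proof -
  assume "\<Delta> > 0"
  moreover have "of_int \<lfloor>s / \<Delta>\<rfloor> \<le> s / \<Delta>" by linarith
  ultimately have "\<Delta> * of_int \<lfloor>s / \<Delta>\<rfloor> \<le> \<Delta> * (s / \<Delta>)" by (intro mult_left_mono) auto
  then show ?thesis unfolding grid_def using \<open>\<Delta> > 0\<close> by simp
qed

lemma less_grid_add: "\<Delta> > 0 \<Longrightarrow> s < grid \<Delta> s + \<Delta>"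
proof -
  assume "\<Delta> > 0"
  moreover have "s / \<Delta> < of_int \<lfloor>s / \<Delta>\<rfloor> + 1" by linarith
  ultimately show ?thesis unfolding grid_def by (simp add: field_simps)
qed

lemma grid_nonneg: "\<Delta> > 0 \<Longrightarrow> 0 \<le> s \<Longrightarrow> 0 \<le> grid \<Delta> s"
  using grid_eq_nat_floor by simp

lemma grid_mult_of_nat: "\<Delta> > 0 \<Longrightarrow> grid \<Delta> (\<Delta> * real k) = \<Delta> * real k"
  unfolding grid_def by simp

lemma mult_of_nat_le_iff:
  assumes "\<Delta> > 0" "0 \<le> t"
  shows "\<Delta> * real k \<le> t \<longleftrightarrow> k \<le> nat \<lfloor>t / \<Delta>\<rfloor>"
proof -
  have "\<Delta> * real k \<le> t \<longleftrightarrow> real k \<le> t / \<Delta>" using assms by (simp add: field_simps)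
  also have "\<dots> \<longleftrightarrow> int k \<le> \<lfloor>t / \<Delta>\<rfloor>" by (simp add: le_floor_iff)
  also have "\<dots> \<longleftrightarrow> k \<le> nat \<lfloor>t / \<Delta>\<rfloor>" using assms by (subst le_nat_iff) auto
  finally show ?thesis .
qed

lemma LIMSEQ_grid:
  assumes pos: "\<And>n. 0 < \<delta> n" and lim: "\<delta> \<longlonglongrightarrow> 0"
  shows "(\<lambda>n. grid (\<delta> n) s) \<longlonglongrightarrow> s"
proof (rule tendsto_sandwich[OF _ _ _ tendsto_const])
  show "(\<lambda>n. s - \<delta> n) \<longlonglongrightarrow> s" using tendsto_diff[OF tendsto_const lim, of s] by simp
  show "\<forall>\<^sub>F n in sequentially. s - \<delta> n \<le> grid (\<delta> n) s"
    using less_grid_add[OF pos] by (simp add: less_imp_le algebra_simps)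
  show "\<forall>\<^sub>F n in sequentially. grid (\<delta> n) s \<le> s" using grid_le[OF pos] by simp
qed

lemma hit_time_le: "0 \<le> r \<Longrightarrow> f r \<le> 0 \<Longrightarrow> hit_time f \<le> ereal r"
  unfolding hit_time_def by (rule INF_lower) auto

lemma hit_time_nonneg: "0 \<le> hit_time f"
  unfolding hit_time_def by (rule INF_greatest) auto

lemma hit_time_finite_nonempty:
  assumes "hit_time f \<noteq> \<infinity>"
  shows "{s. 0 \<le> s \<and> f s \<le> 0} \<noteq> {}"
proof
  assume "{s. 0 \<le> s \<and> f s \<le> 0} = {}"
  then have "ereal ` {s. 0 \<le> s \<and> f s \<le> 0} = {}" by blast
  then show False using assms unfolding hit_time_def by (simp add: top_ereal_def del: image_is_empty)
qed

lemma hit_time_attained: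
  assumes closed: "closed {s. 0 \<le> s \<and> f s \<le> 0}" and finite: "hit_time f \<noteq> \<infinity>"
  obtains T where "0 \<le> T" "hit_time f = ereal T" "f T \<le> 0"
proof -
  let ?S = "{s. 0 \<le> s \<and> f s \<le> 0}"
  have ne: "?S \<noteq> {}" using hit_time_finite_nonempty[OF finite] .
  have bdd: "bdd_below ?S" by (rule bdd_belowI[of _ 0]) auto
  have "Inf ?S \<in> ?S" using closed_contains_Inf[OF ne bdd closed] .
  moreover have "hit_time f = ereal (Inf ?S)"
    unfolding hit_time_def using ereal_Inf'[OF bdd ne] by simp
  ultimately show ?thesis using that by blast
qed

lemma hit_time_grid_le_iff:
  fixes h :: "real \<Rightarrow> real"
  assumes \<Delta>: "\<Delta> > 0"
  shows "hit_time (\<lambda>s. h (grid \<Delta> s)) \<le> ereal t \<longleftrightarrow> (\<exists>k::nat. \<Delta> * real k \<le> t \<and> h (\<Delta> * real k) \<le> 0)"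
proof
  assume "\<exists>k::nat. \<Delta> * real k \<le> t \<and> h (\<Delta> * real k) \<le> 0"
  then obtain k :: nat where k: "\<Delta> * real k \<le> t" "h (\<Delta> * real k) \<le> 0" by blast
  have "hit_time (\<lambda>s. h (grid \<Delta> s)) \<le> ereal (\<Delta> * real k)"
    using k \<Delta> by (intro hit_time_le) (simp_all add: grid_mult_of_nat)
  also have "\<dots> \<le> ereal t" using k by simp
  finally show "hit_time (\<lambda>s. h (grid \<Delta> s)) \<le> ereal t" .
next
  assume H: "hit_time (\<lambda>s. h (grid \<Delta> s)) \<le> ereal t"
  then obtain s0 where s0: "0 \<le> s0" "h (grid \<Delta> s0) \<le> 0"
    using hit_time_finite_nonempty[of "\<lambda>s. h (grid \<Delta> s)"] by fastforce
  let ?K = "{k::nat. h (\<Delta> * real k) \<le> 0}"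
  have "nat \<lfloor>s0 / \<Delta>\<rfloor> \<in> ?K" using s0 grid_eq_nat_floor[OF \<Delta> s0(1)] by simp
  define k0 where "k0 = (LEAST k. k \<in> ?K)"
  have k0K: "k0 \<in> ?K" unfolding k0_def by (rule LeastI) fact
  have "ereal (\<Delta> * real k0) \<le> hit_time (\<lambda>s. h (grid \<Delta> s))"
    unfolding hit_time_def
  proof (rule INF_greatest)
    fix s assume s: "s \<in> {s. 0 \<le> s \<and> h (grid \<Delta> s) \<le> 0}"
    then have "nat \<lfloor>s / \<Delta>\<rfloor> \<in> ?K" using grid_eq_nat_floor[OF \<Delta>] by auto
    then have "k0 \<le> nat \<lfloor>s / \<Delta>\<rfloor>" unfolding k0_def by (rule Least_le)
    then show "ereal (\<Delta> * real k0) \<le> ereal s" using mult_of_nat_le_iff[OF \<Delta>] s by simp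
  qed
  then have "\<Delta> * real k0 \<le> t" using H by (meson ereal_less_eq(3) order_trans)
  then show "\<exists>k::nat. \<Delta> * real k \<le> t \<and> h (\<Delta> * real k) \<le> 0" using k0K by blast
qed

lemma disc_event_eq:
  assumes "\<Delta> > 0"
  shows "disc_event M X0 Z \<alpha> \<Delta> l t = {\<omega>\<in>space M. \<exists>k::nat. \<Delta> * real k \<le> t \<and>
           X0 \<omega> + Z (\<Delta> * real k) \<omega> - \<alpha> * l (\<Delta> * real k) \<le> 0}"
  unfolding disc_event_def using hit_time_grid_le_iff[OF assms, of "\<lambda>r. X0 _ + Z r _ - \<alpha> * l r"] by auto

lemma INF_nonzero_imp_negative:
  fixes g :: "real \<Rightarrow> real"
  assumes "continuous_on {0..h} g" "0 < h" "g 0 = 0" "(INF s\<in>{0..h}. g s) \<noteq> 0"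
  obtains s where "0 < s" "s \<le> h" "g s < 0"
proof -
  have bdd: "bdd_below (g ` {0..h})"
    using assms(1) by (intro bounded_imp_bdd_below compact_imp_bounded compact_continuous_image) auto
  have "(INF s\<in>{0..h}. g s) \<le> g 0" using bdd assms(2) by (intro cINF_lower) auto
  then have "(INF s\<in>{0..h}. g s) < 0" using assms(3,4) by simp
  then obtain s where "s \<in> {0..h}" "g s < 0" using cINF_less_iff[OF _ bdd] assms(2) by auto
  moreover have "s \<noteq> 0" using calculation assms(3) by auto
  ultimately show ?thesis by (intro that[of s]) auto
qed

definition real_lfp :: "(real \<Rightarrow> real) \<Rightarrow> real" where
  "real_lfp f = Inf {y. f y \<le> y}"

lemma bdd_below_prefixpoints:
  assumes "bdd_below (range f)"
  shows "bdd_below {y :: real. f y \<le> y}"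
proof -
  obtain c where "\<And>y. c \<le> f y" using assms by (auto simp: bdd_below_def)
  then show ?thesis by (intro bdd_belowI[of _ c]) (auto intro: order_trans)
qed

lemma real_lfp_lowerbound: "bdd_below (range f) \<Longrightarrow> f y \<le> y \<Longrightarrow> real_lfp f \<le> y"
  unfolding real_lfp_def by (rule cInf_lower) (auto intro: bdd_below_prefixpoints)

lemma real_lfp_unfold:
  fixes f :: "real \<Rightarrow> real"
  assumes mono: "mono f" and bdd: "bdd_below (range f)" and pre: "f b \<le> b"
  shows "f (real_lfp f) = real_lfp f"
proof -
  have below: "f (real_lfp f) \<le> y" if "f y \<le> y" for y
    using monoD[OF mono real_lfp_lowerbound[OF bdd that]] that by linarith
  have le: "f (real_lfp f) \<le> real_lfp f"
    using below pre unfolding real_lfp_def by (intro cInf_greatest) auto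
  then have "real_lfp f \<le> f (real_lfp f)" using real_lfp_lowerbound[OF bdd] monoD[OF mono] by blast
  then show ?thesis using le by simp
qed

section \<open>Right limits of increasing functions\<close>

definition right_lim :: "(real \<Rightarrow> real) \<Rightarrow> real \<Rightarrow> real" where
  "right_lim f t = Inf (f ` {t<..})"

lemma le_right_limI: "(\<And>v. t < v \<Longrightarrow> c \<le> f v) \<Longrightarrow> c \<le> right_lim f t"
  unfolding right_lim_def by (rule cInf_greatest) auto

definition rats_upto :: "real \<Rightarrow> real set" where
  "rats_upto t = {q \<in> \<rat>. 0 \<le> q \<and> q \<le> t} \<union> {t}"

lemma countable_rats_upto: "countable (rats_upto t)"
proof -
  have "countable {q \<in> \<rat>. 0 \<le> q \<and> q \<le> t}" by (rule countable_subset[OF _ countable_rat]) auto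
  then show ?thesis unfolding rats_upto_def by simp
qed

lemma rats_upto_bounds: "0 \<le> t \<Longrightarrow> q \<in> rats_upto t \<Longrightarrow> 0 \<le> q \<and> q \<le> t"
  unfolding rats_upto_def by auto

context
  fixes f :: "real \<Rightarrow> real"
  assumes f_mono: "mono_on {0..} f" and f_bdd: "bdd_below (f ` {0..})"
begin

lemma bdd_below_right: "0 \<le> t \<Longrightarrow> bdd_below (f ` {t<..})"
  by (rule bdd_below_mono[OF f_bdd]) auto

lemma right_lim_le: "0 \<le> r \<Longrightarrow> r < v \<Longrightarrow> right_lim f r \<le> f v"
  unfolding right_lim_def using bdd_below_right by (auto intro: cInf_lower)

lemma le_right_lim: "0 \<le> t \<Longrightarrow> f t \<le> right_lim f t"
  unfolding right_lim_def by (intro cInf_greatest) (auto intro: mono_onD[OF f_mono])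

lemma right_lim_mono: "0 \<le> s \<Longrightarrow> s \<le> t \<Longrightarrow> right_lim f s \<le> right_lim f t"
  unfolding right_lim_def using bdd_below_right[of s] by (intro cInf_superset_mono) auto

lemma right_lim_approx:
  assumes "0 \<le> r" "0 < e"
  obtains v where "r < v" "f v < right_lim f r + e"
proof -
  have "Inf (f ` {r<..}) < right_lim f r + e" using assms unfolding right_lim_def by simp
  then obtain x where "x \<in> f ` {r<..}" "x < right_lim f r + e"
    using cInf_lessD[of "f ` {r<..}"] by force
  then show ?thesis using that by auto
qed

text \<open>Upper semicontinuity of the right limit, in the form of a limit of approximate sublevel points.\<close>
lemma le_right_lim_of_approx:
  assumes y: "continuous_on {0..} y" and r: "rr \<longlonglongrightarrow> r" and nonneg: "\<And>m. 0 \<le> rr m"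
    and e: "ee \<longlonglongrightarrow> 0" and le: "\<And>m. y (rr m) \<le> right_lim f (rr m) + ee m"
  shows "0 \<le> r" "y r \<le> right_lim f r"
proof -
  show r0: "0 \<le> r" using r nonneg by (intro LIMSEQ_le_const) auto
  have y_lim: "(\<lambda>m. y (rr m) - ee m) \<longlonglongrightarrow> y r - 0"
    using continuous_on_tendsto_compose[OF y r] r0 nonneg e by (intro tendsto_diff) auto
  show "y r \<le> right_lim f r"
  proof (rule field_le_epsilon)
    fix e' :: real assume "0 < e'"
    then obtain v where v: "r < v" "f v < right_lim f r + e'" using right_lim_approx r0 by blast
    have "eventually (\<lambda>m. rr m < v) sequentially" using order_tendstoD(2)[OF r v(1)] .
    then have "eventually (\<lambda>m. y (rr m) - ee m \<le> right_lim f r + e') sequentially"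
    proof eventually_elim
      case (elim m)
      then have "right_lim f (rr m) \<le> f v" using right_lim_le nonneg by blast
      then show ?case using le[of m] v by linarith
    qed
    then show "y r \<le> right_lim f r + e'"
      using tendsto_le[OF trivial_limit_sequentially tendsto_const y_lim] by simp
  qed
qed

lemma closed_below_right_lim:
  assumes "continuous_on {0..} y"
  shows "closed {s. 0 \<le> s \<and> y s - right_lim f s \<le> 0}"
  unfolding closed_sequential_limits
proof (intro allI impI, elim conjE)
  fix rr r assume "\<forall>n. rr n \<in> {s. 0 \<le> s \<and> y s - right_lim f s \<le> 0}" "rr \<longlonglongrightarrow> r"
  then show "r \<in> {s. 0 \<le> s \<and> y s - right_lim f s \<le> 0}"
    using le_right_lim_of_approx[OF assms _ _ tendsto_const[of 0], of rr r] by auto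
qed

lemma hit_time_right_lim_attained:
  assumes "continuous_on {0..} y" "hit_time (\<lambda>s. y s - right_lim f s) \<noteq> \<infinity>"
  obtains T where "0 \<le> T" "hit_time (\<lambda>s. y s - right_lim f s) = ereal T" "y T \<le> right_lim f T"
  using hit_time_attained[OF closed_below_right_lim[OF assms(1)] assms(2)] by auto

lemma rats_upto_approx_below:
  assumes y: "continuous_on {0..} y" and T: "0 \<le> T" "T \<le> t" "y T \<le> right_lim f T" and e: "0 < e"
  obtains q where "q \<in> rats_upto t" "y q \<le> right_lim f q + e"
proof (cases "T = t")
  case True
  then show ?thesis using that[of t] T e unfolding rats_upto_def by auto
next
  case False
  obtain d where d: "0 < d" "\<And>x. x \<in> {0..} \<Longrightarrow> dist x T < d \<Longrightarrow> dist (y x) (y T) < e"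
    using y T(1) e unfolding continuous_on_iff by (metis atLeast_iff)
  have "T < min t (T + d)" using False T(2) d(1) by simp
  then obtain q where q: "q \<in> \<rat>" "T < q" "q < min t (T + d)" using Rats_dense_in_real by blast
  have "dist (y q) (y T) < e" using q T(1) by (intro d(2)) (auto simp: dist_real_def)
  moreover have "right_lim f T \<le> right_lim f q" using q T(1) by (intro right_lim_mono) auto
  ultimately have "y q \<le> right_lim f q + e" using T(3) by (simp add: dist_real_def abs_less_iff)
  moreover have "q \<in> rats_upto t" unfolding rats_upto_def using q T(1) by auto
  ultimately show ?thesis using that by blast
qed

text \<open>The hitting event only depends on the path at countably many times, which gives measurability.\<close>
lemma hit_time_right_lim_le_iff:
  assumes y: "continuous_on {0..} y" and t: "0 \<le> t"
  shows "hit_time (\<lambda>s. y s - right_lim f s) \<le> ereal t \<longleftrightarrow>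
    (\<forall>m. \<exists>q\<in>rats_upto t. y q \<le> right_lim f q + inverse (real (Suc m)))"
proof
  assume le_t: "hit_time (\<lambda>s. y s - right_lim f s) \<le> ereal t"
  then have "hit_time (\<lambda>s. y s - right_lim f s) \<noteq> \<infinity>" by auto
  then obtain T where T: "0 \<le> T" "hit_time (\<lambda>s. y s - right_lim f s) = ereal T" "y T \<le> right_lim f T"
    using hit_time_right_lim_attained[OF y] by blast
  have "T \<le> t" using le_t T(2) by simp
  show "\<forall>m. \<exists>q\<in>rats_upto t. y q \<le> right_lim f q + inverse (real (Suc m))"
  proof
    fix m
    have "0 < inverse (real (Suc m))" by simp
    then show "\<exists>q\<in>rats_upto t. y q \<le> right_lim f q + inverse (real (Suc m))"
      using rats_upto_approx_below[OF y T(1) \<open>T \<le> t\<close> T(3)] by blast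
  qed
next
  assume "\<forall>m. \<exists>q\<in>rats_upto t. y q \<le> right_lim f q + inverse (real (Suc m))"
  then obtain q where q: "\<And>m. q m \<in> rats_upto t" "\<And>m. y (q m) \<le> right_lim f (q m) + inverse (real (Suc m))"
    by metis
  have q_bounds: "q m \<in> {0..t}" for m using rats_upto_bounds[OF t q(1)] by auto
  obtain l \<sigma> where l: "l \<in> {0..t}" "strict_mono \<sigma>" "(q \<circ> \<sigma>) \<longlonglongrightarrow> l"
    using compact_Icc[of 0 t, THEN compact_imp_seq_compact, THEN seq_compactE] q_bounds by metis
  have "((\<lambda>m. inverse (real (Suc m))) \<circ> \<sigma>) \<longlonglongrightarrow> 0"
    using LIMSEQ_subseq_LIMSEQ[OF LIMSEQ_inverse_real_of_nat l(2)] .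
  then have "y l \<le> right_lim f l"
    using q(2) q_bounds by (intro le_right_lim_of_approx(2)[OF y l(3)]) auto
  then have "hit_time (\<lambda>s. y s - right_lim f s) \<le> ereal l" using l(1) by (intro hit_time_le) auto
  then show "hit_time (\<lambda>s. y s - right_lim f s) \<le> ereal t" using l(1) by (auto intro: order_trans)
qed

end

section \<open>Discrete solutions\<close>

locale mv_setting = prob_space M for M :: "'a measure" +
  fixes X0 :: "'a \<Rightarrow> real" and Z :: "real \<Rightarrow> 'a \<Rightarrow> real" and \<alpha> :: real
  assumes \<alpha>_pos: "0 < \<alpha>"
    and X0_measurable: "X0 \<in> borel_measurable M"
    and Z_measurable: "\<And>t. 0 \<le> t \<Longrightarrow> Z t \<in> borel_measurable M"
    and Z_continuous: "\<And>\<omega>. \<omega> \<in> space M \<Longrightarrow> continuous_on {0..} (\<lambda>t. Z t \<omega>)"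
begin

lemma measure_mono_AE:
  assumes "AE x in M. x \<in> A \<longrightarrow> x \<in> B" "A \<in> sets M" "B \<in> sets M"
  shows "measure M A \<le> measure M B"
  using emeasure_mono_AE[OF assms(1,3)] assms(2,3) by (simp add: emeasure_eq_measure)

lemma path_continuous: "\<omega> \<in> space M \<Longrightarrow> continuous_on {0..} (\<lambda>s. X0 \<omega> + Z s \<omega>)"
  using Z_continuous by (intro continuous_on_add continuous_on_const)

definition below_at :: "real \<Rightarrow> real \<Rightarrow> 'a set" where
  "below_at s c = {\<omega>\<in>space M. X0 \<omega> + Z s \<omega> \<le> c}"

lemma sets_below_at: "0 \<le> s \<Longrightarrow> below_at s c \<in> sets M"
  unfolding below_at_def using X0_measurable Z_measurable[of s] by measurable

definition grid_hit :: "real \<Rightarrow> (real \<Rightarrow> real) \<Rightarrow> real \<Rightarrow> 'a set" where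
  "grid_hit \<Delta> L t = {\<omega>\<in>space M. \<exists>k::nat. \<Delta> * real k \<le> t \<and> X0 \<omega> + Z (\<Delta> * real k) \<omega> \<le> L (\<Delta> * real k)}"

lemma grid_hit_mono: "s \<le> t \<Longrightarrow> grid_hit \<Delta> L s \<subseteq> grid_hit \<Delta> L t"
  unfolding grid_hit_def by force

lemma grid_hit_at_grid:
  assumes "0 < \<Delta>" "0 \<le> t"
  shows "grid_hit \<Delta> L (grid \<Delta> t) = grid_hit \<Delta> L t"
  unfolding grid_hit_def grid_eq_nat_floor[OF assms] using mult_of_nat_le_iff[OF assms] assms(1) by auto

lemma grid_hit_grid_point:
  assumes "0 < \<Delta>" "0 \<le> t" "\<omega> \<in> space M" "X0 \<omega> + Z (grid \<Delta> t) \<omega> \<le> L (grid \<Delta> t)"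
  shows "\<omega> \<in> grid_hit \<Delta> L t"
  using assms grid_le[OF assms(1), of t] unfolding grid_hit_def grid_eq_nat_floor[OF assms(1,2)] by blast

lemma MV_disc_solution_iff:
  assumes "0 < \<Delta>"
  shows "MV_disc_solution M X0 Z \<alpha> \<Delta> L \<longleftrightarrow>
    (\<forall>t\<ge>0. grid_hit \<Delta> L t \<in> sets M \<and> L t = \<alpha> * measure M (grid_hit \<Delta> L t))"
proof -
  have "disc_event M X0 Z \<alpha> \<Delta> (\<lambda>s. L s / \<alpha>) t = grid_hit \<Delta> L t" for t
    unfolding disc_event_eq[OF assms] grid_hit_def using \<alpha>_pos by simp
  then show ?thesis unfolding MV_disc_solution_def Gamma_disc_def by auto
qed

context
  fixes \<Delta> :: real and L :: "real \<Rightarrow> real"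
  assumes \<Delta>_pos: "0 < \<Delta>" and solution: "MV_disc_solution M X0 Z \<alpha> \<Delta> L"
begin

lemma disc_solution_sets: "0 \<le> t \<Longrightarrow> grid_hit \<Delta> L t \<in> sets M"
  and disc_solution_eq: "0 \<le> t \<Longrightarrow> L t = \<alpha> * measure M (grid_hit \<Delta> L t)"
  using solution unfolding MV_disc_solution_iff[OF \<Delta>_pos] by blast+

lemma disc_solution_nonneg: "0 \<le> t \<Longrightarrow> 0 \<le> L t"
  using disc_solution_eq \<alpha>_pos by simp

lemma disc_solution_mono: "0 \<le> s \<Longrightarrow> s \<le> t \<Longrightarrow> L s \<le> L t"
  using disc_solution_eq disc_solution_sets grid_hit_mono \<alpha>_pos
  by (simp add: finite_measure_mono)

lemma disc_solution_at_grid: "0 \<le> t \<Longrightarrow> L (grid \<Delta> t) = L t"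
  using disc_solution_eq[of t] disc_solution_eq[of "grid \<Delta> t"]
    grid_hit_at_grid[OF \<Delta>_pos] grid_nonneg[OF \<Delta>_pos] by simp

end

text \<open>The loss at time \<open>s\<close> if the barrier sits at \<open>y\<close> and the paths in \<open>E\<close> have already been
  absorbed; at each grid time the minimal discrete solution jumps to its least fixed point.\<close>
definition cascade :: "'a set \<Rightarrow> real \<Rightarrow> real \<Rightarrow> real" where
  "cascade E s y = \<alpha> * measure M (E \<union> below_at s y)"

lemma mono_cascade:
  assumes "E \<in> sets M" "0 \<le> s"
  shows "mono (cascade E s)"
proof (rule monoI)
  fix x y :: real assume "x \<le> y"
  then have "E \<union> below_at s x \<subseteq> E \<union> below_at s y" unfolding below_at_def by auto
  then show "cascade E s x \<le> cascade E s y"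
    unfolding cascade_def using assms \<alpha>_pos
    by (intro mult_left_mono finite_measure_mono) (auto simp: sets_below_at)
qed

lemma cascade_nonneg: "0 \<le> cascade E s y"
  unfolding cascade_def using \<alpha>_pos by simp

lemma cascade_le_\<alpha>: "cascade E s y \<le> \<alpha>"
  unfolding cascade_def using \<alpha>_pos prob_le_1 by (simp add: mult_le_cancel_left1)

lemma bdd_below_cascade: "bdd_below (range (cascade E s))"
  using cascade_nonneg by (intro bdd_belowI2[of _ 0])

primrec disc_hits :: "real \<Rightarrow> nat \<Rightarrow> 'a set" where
  "disc_hits \<Delta> 0 = {}"
| "disc_hits \<Delta> (Suc k) = disc_hits \<Delta> k \<union>
     below_at (\<Delta> * real k) (real_lfp (cascade (disc_hits \<Delta> k) (\<Delta> * real k)))"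

definition disc_level :: "real \<Rightarrow> nat \<Rightarrow> real" where
  "disc_level \<Delta> k = real_lfp (cascade (disc_hits \<Delta> k) (\<Delta> * real k))"

lemma disc_hits_Suc: "disc_hits \<Delta> (Suc k) = disc_hits \<Delta> k \<union> below_at (\<Delta> * real k) (disc_level \<Delta> k)"
  by (simp add: disc_level_def)

declare disc_hits.simps(2) [simp del]

lemma sets_disc_hits: "0 \<le> \<Delta> \<Longrightarrow> disc_hits \<Delta> k \<in> sets M"
  by (induction k) (auto simp: disc_hits_Suc sets_below_at)

lemma disc_hits_eq: "disc_hits \<Delta> k = {\<omega>\<in>space M. \<exists>j<k. X0 \<omega> + Z (\<Delta> * real j) \<omega> \<le> disc_level \<Delta> j}"
  by (induction k) (auto simp: disc_hits_Suc below_at_def less_Suc_eq)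

lemma disc_level_unfold: "0 \<le> \<Delta> \<Longrightarrow> \<alpha> * measure M (disc_hits \<Delta> (Suc k)) = disc_level \<Delta> k"
  using real_lfp_unfold[OF mono_cascade bdd_below_cascade cascade_le_\<alpha>] sets_disc_hits
  unfolding disc_hits_Suc disc_level_def cascade_def[of _ _ "real_lfp _"] by simp

lemma disc_level_lowerbound: "cascade (disc_hits \<Delta> k) (\<Delta> * real k) y \<le> y \<Longrightarrow> disc_level \<Delta> k \<le> y"
  unfolding disc_level_def by (rule real_lfp_lowerbound[OF bdd_below_cascade])

definition disc_greedy :: "real \<Rightarrow> real \<Rightarrow> real" where
  "disc_greedy \<Delta> t = disc_level \<Delta> (nat \<lfloor>t / \<Delta>\<rfloor>)"

lemma MV_disc_solution_disc_greedy:
  assumes \<Delta>: "0 < \<Delta>"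
  shows "MV_disc_solution M X0 Z \<alpha> \<Delta> (disc_greedy \<Delta>)"
  unfolding MV_disc_solution_iff[OF \<Delta>]
proof (intro allI impI)
  fix t :: real assume t: "0 \<le> t"
  have "grid_hit \<Delta> (disc_greedy \<Delta>) t = disc_hits \<Delta> (Suc (nat \<lfloor>t / \<Delta>\<rfloor>))"
    unfolding grid_hit_def disc_hits_eq disc_greedy_def
    using mult_of_nat_le_iff[OF \<Delta> t] \<Delta> by (auto simp: less_Suc_eq_le)
  then show "grid_hit \<Delta> (disc_greedy \<Delta>) t \<in> sets M \<and>
      disc_greedy \<Delta> t = \<alpha> * measure M (grid_hit \<Delta> (disc_greedy \<Delta>) t)"
    using \<Delta> sets_disc_hits disc_level_unfold by (simp add: disc_greedy_def)
qed

text \<open>The measurable cover \<open>B\<close> spares us from proving that \<open>grid_hit \<Delta> S\<close> is measurable.\<close>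
definition grid_supersolution :: "real \<Rightarrow> (real \<Rightarrow> real) \<Rightarrow> bool" where
  "grid_supersolution \<Delta> S \<longleftrightarrow>
    (\<forall>k. \<exists>B\<in>sets M. grid_hit \<Delta> S (\<Delta> * real k) \<subseteq> B \<and> \<alpha> * measure M B \<le> S (\<Delta> * real k))"

lemma disc_level_le_supersolution:
  assumes \<Delta>: "0 < \<Delta>" and super: "grid_supersolution \<Delta> S"
  shows "disc_level \<Delta> k \<le> S (\<Delta> * real k)"
proof (induction k rule: less_induct)
  case (less k)
  obtain B where B: "B \<in> sets M" "grid_hit \<Delta> S (\<Delta> * real k) \<subseteq> B" "\<alpha> * measure M B \<le> S (\<Delta> * real k)"
    using super unfolding grid_supersolution_def by blast
  have "disc_hits \<Delta> k \<union> below_at (\<Delta> * real k) (S (\<Delta> * real k)) \<subseteq> grid_hit \<Delta> S (\<Delta> * real k)"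
  proof (intro subsetI, elim UnE)
    fix \<omega> assume "\<omega> \<in> disc_hits \<Delta> k"
    then obtain j where j: "\<omega> \<in> space M" "j < k" "X0 \<omega> + Z (\<Delta> * real j) \<omega> \<le> disc_level \<Delta> j"
      unfolding disc_hits_eq by blast
    then have "X0 \<omega> + Z (\<Delta> * real j) \<omega> \<le> S (\<Delta> * real j)" using less[of j] by linarith
    moreover have "\<Delta> * real j \<le> \<Delta> * real k" using j(2) \<Delta> by simp
    ultimately show "\<omega> \<in> grid_hit \<Delta> S (\<Delta> * real k)" unfolding grid_hit_def using j(1) by blast
  next
    fix \<omega> assume "\<omega> \<in> below_at (\<Delta> * real k) (S (\<Delta> * real k))"
    then show "\<omega> \<in> grid_hit \<Delta> S (\<Delta> * real k)" unfolding below_at_def grid_hit_def by blast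
  qed
  then have "cascade (disc_hits \<Delta> k) (\<Delta> * real k) (S (\<Delta> * real k)) \<le> \<alpha> * measure M B"
    unfolding cascade_def using B \<alpha>_pos by (intro mult_left_mono finite_measure_mono) auto
  then show ?case using B(3) by (intro disc_level_lowerbound) linarith
qed

lemma MV_disc_minimal_le_supersolution:
  assumes \<Delta>: "0 < \<Delta>" and minimal: "MV_disc_minimal_solution M X0 Z \<alpha> \<Delta> L"
    and super: "grid_supersolution \<Delta> S" and t: "0 \<le> t"
  shows "L t \<le> S (grid \<Delta> t)"
proof -
  have "L t \<le> disc_greedy \<Delta> t"
    using minimal MV_disc_solution_disc_greedy[OF \<Delta>] t unfolding MV_disc_minimal_solution_def by blast
  also have "\<dots> \<le> S (grid \<Delta> t)"
    unfolding disc_greedy_def grid_eq_nat_floor[OF \<Delta> t] by (rule disc_level_le_supersolution[OF \<Delta> super])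
  finally show ?thesis .
qed

section \<open>Continuous solutions\<close>

definition hit_event :: "(real \<Rightarrow> real) \<Rightarrow> real \<Rightarrow> 'a set" where
  "hit_event L t = {\<omega>\<in>space M. hit_time (\<lambda>s. X0 \<omega> + Z s \<omega> - L s) \<le> ereal t}"

lemma MV_solution_iff:
  "MV_solution M X0 Z \<alpha> L \<longleftrightarrow> (\<forall>t\<ge>0. hit_event L t \<in> sets M \<and> L t = \<alpha> * measure M (hit_event L t))"
  unfolding MV_solution_def hit_event_def by simp

lemma hit_event_mono: "s \<le> t \<Longrightarrow> hit_event L s \<subseteq> hit_event L t"
  unfolding hit_event_def by (auto intro: order_trans)

lemma INT_hit_event: "(\<Inter>m. hit_event L (t + inverse (real (Suc m)))) = hit_event L t"
proof (intro equalityI subsetI)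
  fix \<omega> assume \<omega>: "\<omega> \<in> (\<Inter>m. hit_event L (t + inverse (real (Suc m))))"
  have "hit_time (\<lambda>s. X0 \<omega> + Z s \<omega> - L s) \<le> ereal t"
  proof (rule ereal_le_epsilon2)
    fix e :: real assume "0 < e"
    then obtain m where "inverse (real (Suc m)) < e" using reals_Archimedean by blast
    moreover have "hit_time (\<lambda>s. X0 \<omega> + Z s \<omega> - L s) \<le> ereal (t + inverse (real (Suc m)))"
      using \<omega> unfolding hit_event_def by blast
    ultimately show "hit_time (\<lambda>s. X0 \<omega> + Z s \<omega> - L s) \<le> ereal t + ereal e"
      by (auto elim: order_trans)
  qed
  then show "\<omega> \<in> hit_event L t" using \<omega> unfolding hit_event_def by blast
next
  fix \<omega> assume "\<omega> \<in> hit_event L t"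
  moreover have "t \<le> t + inverse (real (Suc m))" for m by simp
  ultimately show "\<omega> \<in> (\<Inter>m. hit_event L (t + inverse (real (Suc m))))" using hit_event_mono by blast
qed

lemma MV_solution_mono:
  assumes "MV_solution M X0 Z \<alpha> L" "0 \<le> s" "s \<le> t"
  shows "L s \<le> L t"
  using assms hit_event_mono[of s t L] \<alpha>_pos unfolding MV_solution_iff
  by (simp add: finite_measure_mono)

lemma grid_hit_subset_hit_event:
  assumes "0 < \<Delta>" "\<And>s. 0 \<le> s \<Longrightarrow> L s \<le> L' s"
  shows "grid_hit \<Delta> L t \<subseteq> hit_event L' t"
proof
  fix \<omega> assume "\<omega> \<in> grid_hit \<Delta> L t"
  then obtain k :: nat where k: "\<omega> \<in> space M" "\<Delta> * real k \<le> t"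
    "X0 \<omega> + Z (\<Delta> * real k) \<omega> \<le> L (\<Delta> * real k)" unfolding grid_hit_def by blast
  have "0 \<le> \<Delta> * real k" using assms(1) by simp
  then have "hit_time (\<lambda>s. X0 \<omega> + Z s \<omega> - L' s) \<le> ereal (\<Delta> * real k)"
    using k(3) assms(2) by (intro hit_time_le) force+
  then show "\<omega> \<in> hit_event L' t" unfolding hit_event_def using k by (auto intro: order_trans)
qed

lemma MV_solution_grid_supersolution:
  assumes \<Delta>: "0 < \<Delta>" and solution: "MV_solution M X0 Z \<alpha> L"
  shows "grid_supersolution \<Delta> L"
  unfolding grid_supersolution_def
proof
  fix k
  have "0 \<le> \<Delta> * real k" using \<Delta> by simp
  then have "hit_event L (\<Delta> * real k) \<in> sets M" "\<alpha> * measure M (hit_event L (\<Delta> * real k)) = L (\<Delta> * real k)"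
    using solution unfolding MV_solution_iff by auto
  moreover have "grid_hit \<Delta> L (\<Delta> * real k) \<subseteq> hit_event L (\<Delta> * real k)"
    by (rule grid_hit_subset_hit_event[OF \<Delta>]) simp
  ultimately show "\<exists>B\<in>sets M. grid_hit \<Delta> L (\<Delta> * real k) \<subseteq> B \<and> \<alpha> * measure M B \<le> L (\<Delta> * real k)"
    by (intro bexI[of _ "hit_event L (\<Delta> * real k)"]) auto
qed

context
  fixes f :: "real \<Rightarrow> real"
  assumes f_mono: "mono_on {0..} f" and f_bdd: "bdd_below (f ` {0..})"
begin

lemma hit_event_right_lim_eq:
  assumes t: "0 \<le> t"
  shows "hit_event (right_lim f) t = (\<Inter>m. \<Union>q\<in>rats_upto t. below_at q (right_lim f q + inverse (real (Suc m))))"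
proof (rule set_eqI)
  fix \<omega>
  show "\<omega> \<in> hit_event (right_lim f) t \<longleftrightarrow>
      \<omega> \<in> (\<Inter>m. \<Union>q\<in>rats_upto t. below_at q (right_lim f q + inverse (real (Suc m))))"
  proof (cases "\<omega> \<in> space M")
    case True
    show ?thesis
      using hit_time_right_lim_le_iff[OF f_mono f_bdd path_continuous[OF True] t] True
      unfolding hit_event_def below_at_def by simp
  qed (simp add: hit_event_def below_at_def)
qed

lemma sets_hit_event_right_lim:
  assumes t: "0 \<le> t"
  shows "hit_event (right_lim f) t \<in> sets M"
  unfolding hit_event_right_lim_eq[OF t]
proof (intro sets.countable_INT' sets.countable_UN')
  show "range (\<lambda>m. \<Union>q\<in>rats_upto t. below_at q (right_lim f q + inverse (real (Suc m)))) \<subseteq> sets M"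
    using countable_rats_upto rats_upto_bounds[OF t] sets_below_at by (auto intro!: sets.countable_UN')
qed simp_all

lemma hit_event_right_lim_natural_filtration:
  assumes t: "0 \<le> t"
  shows "hit_event (right_lim f) t \<in> sets (natural_filtration M (\<lambda>s \<omega>. X0 \<omega> + Z s \<omega>) t)"
    (is "_ \<in> sets ?F")
proof -
  let ?G = "{(\<lambda>\<omega>. X0 \<omega> + Z s \<omega>) -` B \<inter> space M | s B. s \<in> {0..t} \<and> B \<in> sets borel}"
  have sets_eq: "sets ?F = sigma_sets (space M) ?G"
    unfolding natural_filtration_def by (rule sets_measure_of) auto
  have below: "below_at q c \<in> sets ?F" if "q \<in> rats_upto t" for q c
    unfolding sets_eq
  proof (rule sigma_sets.Basic)
    show "below_at q c \<in> ?G"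
      using rats_upto_bounds[OF t that] unfolding below_at_def
      by (intro CollectI exI[of _ q] exI[of _ "{..c}"]) auto
  qed
  show ?thesis
    unfolding hit_event_right_lim_eq[OF t]
  proof (intro sets.countable_INT' sets.countable_UN')
    show "range (\<lambda>m. \<Union>q\<in>rats_upto t. below_at q (right_lim f q + inverse (real (Suc m)))) \<subseteq> sets ?F"
      using countable_rats_upto below by (auto intro!: sets.countable_UN')
  qed simp_all
qed

lemma stopping_time_hit_time_right_lim:
  "is_stopping_time M (natural_filtration M (\<lambda>s \<omega>. X0 \<omega> + Z s \<omega>))
     (\<lambda>\<omega>. hit_time (\<lambda>s. X0 \<omega> + Z s \<omega> - right_lim f s))"
  using hit_time_nonneg hit_event_right_lim_natural_filtration
  unfolding is_stopping_time_def hit_event_def by auto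

end

end

section \<open>Convergence along nested grids\<close>

locale mv_discretisation = mv_setting M X0 Z \<alpha> for M :: "'a measure" and X0 Z \<alpha> +
  fixes \<Lambda> :: "real \<Rightarrow> real" and \<Lambda>d :: "nat \<Rightarrow> real \<Rightarrow> real" and \<Delta> :: "nat \<Rightarrow> real"
  assumes minimal: "MV_minimal_solution M X0 Z \<alpha> \<Lambda>"
    and \<Delta>_pos: "\<And>n. 0 < \<Delta> n"
    and disc_minimal: "\<And>n. MV_disc_minimal_solution M X0 Z \<alpha> (\<Delta> n) (\<Lambda>d n)"
    and nested: "\<And>n. {\<Delta> n * real k | k. k \<in> (UNIV :: nat set)} \<subseteq> {\<Delta> (Suc n) * real k | k. k \<in> (UNIV :: nat set)}"
    and \<Delta>_lim: "\<Delta> \<longlonglongrightarrow> 0"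
    and crossing: "crossing_property M X0 Z"
begin

lemma solution: "MV_solution M X0 Z \<alpha> \<Lambda>"
  using minimal unfolding MV_minimal_solution_def by blast

lemma disc_solution: "MV_disc_solution M X0 Z \<alpha> (\<Delta> n) (\<Lambda>d n)"
  using disc_minimal unfolding MV_disc_minimal_solution_def by blast

lemma disc_le_minimal:
  assumes t: "0 \<le> t"
  shows "\<Lambda>d n t \<le> \<Lambda> t"
proof -
  have "\<Lambda>d n t \<le> \<Lambda> (grid (\<Delta> n) t)"
    by (rule MV_disc_minimal_le_supersolution[OF \<Delta>_pos disc_minimal
          MV_solution_grid_supersolution[OF \<Delta>_pos solution] t])
  also have "\<dots> \<le> \<Lambda> t"
    by (rule MV_solution_mono[OF solution grid_nonneg[OF \<Delta>_pos t] grid_le[OF \<Delta>_pos]])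
  finally show ?thesis .
qed

lemma grid_hit_Suc_subset: "grid_hit (\<Delta> n) L t \<subseteq> grid_hit (\<Delta> (Suc n)) L t"
proof
  fix \<omega> assume "\<omega> \<in> grid_hit (\<Delta> n) L t"
  then obtain k :: nat where k: "\<omega> \<in> space M" "\<Delta> n * real k \<le> t"
    "X0 \<omega> + Z (\<Delta> n * real k) \<omega> \<le> L (\<Delta> n * real k)" unfolding grid_hit_def by blast
  obtain i :: nat where "\<Delta> n * real k = \<Delta> (Suc n) * real i" using nested[of n] by blast
  then show "\<omega> \<in> grid_hit (\<Delta> (Suc n)) L t" unfolding grid_hit_def using k by auto
qed

text \<open>On nested grids the finer minimal solution is a supersolution of the coarser problem.\<close>
lemma disc_le_disc_Suc: "0 \<le> t \<Longrightarrow> \<Lambda>d n t \<le> \<Lambda>d (Suc n) t"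
proof -
  assume t: "0 \<le> t"
  have "grid_supersolution (\<Delta> n) (\<Lambda>d (Suc n))"
    unfolding grid_supersolution_def
  proof
    fix k
    let ?s = "\<Delta> n * real k"
    have s: "0 \<le> ?s" using \<Delta>_pos[of n] by simp
    show "\<exists>B\<in>sets M. grid_hit (\<Delta> n) (\<Lambda>d (Suc n)) ?s \<subseteq> B \<and> \<alpha> * measure M B \<le> \<Lambda>d (Suc n) ?s"
      using grid_hit_Suc_subset disc_solution_sets[OF \<Delta>_pos disc_solution s]
        disc_solution_eq[OF \<Delta>_pos disc_solution s]
      by (intro bexI[of _ "grid_hit (\<Delta> (Suc n)) (\<Lambda>d (Suc n)) ?s"]) auto
  qed
  then have "\<Lambda>d n t \<le> \<Lambda>d (Suc n) (grid (\<Delta> n) t)"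
    using MV_disc_minimal_le_supersolution[OF \<Delta>_pos disc_minimal _ t] by blast
  also have "\<dots> \<le> \<Lambda>d (Suc n) t"
    by (rule disc_solution_mono[OF \<Delta>_pos disc_solution grid_nonneg[OF \<Delta>_pos t] grid_le[OF \<Delta>_pos]])
  finally show ?thesis .
qed

definition \<Lambda>lim :: "real \<Rightarrow> real" where
  "\<Lambda>lim t = (SUP n. \<Lambda>d n t)"

lemma incseq_disc: "0 \<le> t \<Longrightarrow> incseq (\<lambda>n. \<Lambda>d n t)"
  using disc_le_disc_Suc by (simp add: incseq_SucI)

lemma LIMSEQ_\<Lambda>lim: "0 \<le> t \<Longrightarrow> (\<lambda>n. \<Lambda>d n t) \<longlonglongrightarrow> \<Lambda>lim t"
  unfolding \<Lambda>lim_def using incseq_disc disc_le_minimal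
  by (intro LIMSEQ_incseq_SUP) (auto simp: bdd_above_def)

lemma disc_le_\<Lambda>lim: "0 \<le> t \<Longrightarrow> \<Lambda>d n t \<le> \<Lambda>lim t"
  using LIMSEQ_\<Lambda>lim incseq_disc by (metis incseq_le)

lemma \<Lambda>lim_le_minimal: "0 \<le> t \<Longrightarrow> \<Lambda>lim t \<le> \<Lambda> t"
  using LIMSEQ_\<Lambda>lim disc_le_minimal by (metis LIMSEQ_le_const2)

lemma \<Lambda>lim_nonneg: "0 \<le> t \<Longrightarrow> 0 \<le> \<Lambda>lim t"
  using disc_le_\<Lambda>lim[of t 0] disc_solution_nonneg[OF \<Delta>_pos disc_solution, of t 0] by linarith

lemma mono_on_\<Lambda>lim: "mono_on {0..} \<Lambda>lim"
proof (rule mono_onI)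
  fix s t :: real assume "s \<in> {0..}" "s \<le> t"
  then have "\<Lambda>d n s \<le> \<Lambda>d n t" for n using disc_solution_mono[OF \<Delta>_pos disc_solution] by auto
  then show "\<Lambda>lim s \<le> \<Lambda>lim t" using LIMSEQ_\<Lambda>lim \<open>s \<in> {0..}\<close> \<open>s \<le> t\<close> by (meson LIMSEQ_le atLeast_iff order_trans)
qed

lemma bdd_below_\<Lambda>lim: "bdd_below (\<Lambda>lim ` {0..})"
  using \<Lambda>lim_nonneg by (intro bdd_belowI2[of _ 0]) auto

lemmas right_lim_\<Lambda>lim_le = right_lim_le[OF mono_on_\<Lambda>lim bdd_below_\<Lambda>lim]
  and le_right_lim_\<Lambda>lim = le_right_lim[OF mono_on_\<Lambda>lim bdd_below_\<Lambda>lim]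
  and sets_hit_event_right_lim_\<Lambda>lim = sets_hit_event_right_lim[OF mono_on_\<Lambda>lim bdd_below_\<Lambda>lim]

lemma measure_UN_grid_hit:
  assumes t: "0 \<le> t"
  shows "\<alpha> * measure M (\<Union>n. grid_hit (\<Delta> n) (\<Lambda>d n) t) = \<Lambda>lim t"
proof -
  have sets: "range (\<lambda>n. grid_hit (\<Delta> n) (\<Lambda>d n) t) \<subseteq> sets M"
    using disc_solution_sets[OF \<Delta>_pos disc_solution t] by auto
  have "grid_hit (\<Delta> n) (\<Lambda>d n) t \<subseteq> grid_hit (\<Delta> (Suc n)) (\<Lambda>d (Suc n)) t" for n
  proof -
    have "\<Lambda>d n (\<Delta> n * real k) \<le> \<Lambda>d (Suc n) (\<Delta> n * real k)" for k
      using \<Delta>_pos[of n] by (intro disc_le_disc_Suc) simp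
    then have "grid_hit (\<Delta> n) (\<Lambda>d n) t \<subseteq> grid_hit (\<Delta> n) (\<Lambda>d (Suc n)) t"
      unfolding grid_hit_def by (blast intro: order_trans)
    then show ?thesis using grid_hit_Suc_subset by blast
  qed
  then have "(\<lambda>n. \<alpha> * measure M (grid_hit (\<Delta> n) (\<Lambda>d n) t)) \<longlonglongrightarrow> \<alpha> * measure M (\<Union>n. grid_hit (\<Delta> n) (\<Lambda>d n) t)"
    using finite_Lim_measure_incseq[OF sets] by (intro tendsto_mult_left) (simp add: incseq_SucI)
  moreover have "(\<lambda>n. \<alpha> * measure M (grid_hit (\<Delta> n) (\<Lambda>d n) t)) \<longlonglongrightarrow> \<Lambda>lim t"
    using LIMSEQ_\<Lambda>lim[OF t] disc_solution_eq[OF \<Delta>_pos disc_solution t] by simp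
  ultimately show ?thesis by (rule LIMSEQ_unique)
qed

lemma grid_hit_subset_hit_event_right_lim:
  "grid_hit (\<Delta> n) (\<Lambda>d n) t \<subseteq> hit_event (right_lim \<Lambda>lim) t"
  using disc_le_\<Lambda>lim le_right_lim_\<Lambda>lim by (intro grid_hit_subset_hit_event[OF \<Delta>_pos]) (blast intro: order_trans)

lemma \<Lambda>lim_le_measure:
  assumes t: "0 \<le> t"
  shows "\<Lambda>lim t \<le> \<alpha> * measure M (hit_event (right_lim \<Lambda>lim) t)"
proof (rule LIMSEQ_le_const2[OF LIMSEQ_\<Lambda>lim[OF t]], intro exI allI impI)
  fix n
  have "measure M (grid_hit (\<Delta> n) (\<Lambda>d n) t) \<le> measure M (hit_event (right_lim \<Lambda>lim) t)"
    using grid_hit_subset_hit_event_right_lim sets_hit_event_right_lim_\<Lambda>lim[OF t]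
    by (intro finite_measure_mono)
  then show "\<Lambda>d n t \<le> \<alpha> * measure M (hit_event (right_lim \<Lambda>lim) t)"
    using disc_solution_eq[OF \<Delta>_pos disc_solution t] \<alpha>_pos by simp
qed

lemma right_lim_le_measure:
  assumes t: "0 \<le> t"
  shows "right_lim \<Lambda>lim t \<le> \<alpha> * measure M (hit_event (right_lim \<Lambda>lim) t)"
proof -
  define A where "A m = hit_event (right_lim \<Lambda>lim) (t + inverse (real (Suc m)))" for m
  have sets: "range A \<subseteq> sets M" unfolding A_def using t by (auto intro!: sets_hit_event_right_lim_\<Lambda>lim)
  have "decseq A" unfolding A_def
    by (intro decseq_SucI hit_event_mono) (simp add: field_simps)
  then have "(\<lambda>m. \<alpha> * measure M (A m)) \<longlonglongrightarrow> \<alpha> * measure M (hit_event (right_lim \<Lambda>lim) t)"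
    using finite_Lim_measure_decseq[OF sets] INT_hit_event unfolding A_def by (intro tendsto_mult_left) simp
  moreover have "right_lim \<Lambda>lim t \<le> \<alpha> * measure M (A m)" for m
  proof -
    have "right_lim \<Lambda>lim t \<le> \<Lambda>lim (t + inverse (real (Suc m)))" using t by (intro right_lim_\<Lambda>lim_le) auto
    also have "\<dots> \<le> \<alpha> * measure M (A m)" unfolding A_def using t by (intro \<Lambda>lim_le_measure) auto
    finally show ?thesis .
  qed
  ultimately show ?thesis by (intro LIMSEQ_le_const) auto
qed

text \<open>This is where the crossing property enters.\<close>
lemma AE_dips_below:
  assumes h: "0 < h"
  shows "AE \<omega> in M. \<forall>T. hit_time (\<lambda>s. X0 \<omega> + Z s \<omega> - right_lim \<Lambda>lim s) = ereal T \<longrightarrow>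
            (\<exists>u. T < u \<and> u \<le> T + h \<and> X0 \<omega> + Z u \<omega> < \<Lambda>lim u)"
proof -
  let ?\<tau> = "\<lambda>\<omega>. hit_time (\<lambda>s. X0 \<omega> + Z s \<omega> - right_lim \<Lambda>lim s)"
  have "AE \<omega> in M. \<not> (?\<tau> \<omega> < \<infinity> \<and>
      (INF s\<in>{0..h}. Z (real_of_ereal (?\<tau> \<omega>) + s) \<omega> - Z (real_of_ereal (?\<tau> \<omega>)) \<omega>) = 0)"
    using crossing stopping_time_hit_time_right_lim[OF mono_on_\<Lambda>lim bdd_below_\<Lambda>lim] h
    unfolding crossing_property_def by blast
  then show ?thesis
  proof (elim AE_mp, intro AE_I2 impI allI)
    fix \<omega> T
    assume \<omega>: "\<omega> \<in> space M" and \<tau>: "?\<tau> \<omega> = ereal T"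
      and not_flat: "\<not> (?\<tau> \<omega> < \<infinity> \<and>
        (INF s\<in>{0..h}. Z (real_of_ereal (?\<tau> \<omega>) + s) \<omega> - Z (real_of_ereal (?\<tau> \<omega>)) \<omega>) = 0)"
    obtain T' where T': "0 \<le> T'" "?\<tau> \<omega> = ereal T'" "X0 \<omega> + Z T' \<omega> \<le> right_lim \<Lambda>lim T'"
      using hit_time_right_lim_attained[OF mono_on_\<Lambda>lim bdd_below_\<Lambda>lim path_continuous[OF \<omega>]] \<tau> by auto
    with \<tau> have T: "0 \<le> T" "X0 \<omega> + Z T \<omega> \<le> right_lim \<Lambda>lim T" by auto
    have "continuous_on {0..h} (\<lambda>s. Z (T + s) \<omega>)"
      by (rule continuous_on_compose2[OF Z_continuous[OF \<omega>]]) (auto intro!: continuous_intros simp: T(1))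
    then have "continuous_on {0..h} (\<lambda>s. Z (T + s) \<omega> - Z T \<omega>)" by (intro continuous_intros)
    moreover have "(INF s\<in>{0..h}. Z (T + s) \<omega> - Z T \<omega>) \<noteq> 0" using not_flat \<tau> by simp
    ultimately obtain s where s: "0 < s" "s \<le> h" "Z (T + s) \<omega> - Z T \<omega> < 0"
      using INF_nonzero_imp_negative[of h "\<lambda>s. Z (T + s) \<omega> - Z T \<omega>"] h by auto
    have "right_lim \<Lambda>lim T \<le> \<Lambda>lim (T + s)" using T(1) s(1) by (intro right_lim_\<Lambda>lim_le) auto
    then have "X0 \<omega> + Z (T + s) \<omega> < \<Lambda>lim (T + s)" using T(2) s(3) by linarith
    then show "\<exists>u. T < u \<and> u \<le> T + h \<and> X0 \<omega> + Z u \<omega> < \<Lambda>lim u"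
      using s by (intro exI[of _ "T + s"]) auto
  qed
qed

lemma below_\<Lambda>lim_grid_hit:
  assumes \<omega>: "\<omega> \<in> space M" and u: "0 \<le> u" and below: "X0 \<omega> + Z u \<omega> < \<Lambda>lim u"
  obtains n where "\<omega> \<in> grid_hit (\<Delta> n) (\<Lambda>d n) u"
proof -
  define \<delta> where "\<delta> = \<Lambda>lim u - (X0 \<omega> + Z u \<omega>)"
  have \<delta>: "0 < \<delta>" using below unfolding \<delta>_def by simp
  have "eventually (\<lambda>n. \<Lambda>lim u - \<delta> / 2 < \<Lambda>d n u) sequentially"
    using LIMSEQ_\<Lambda>lim[OF u] \<delta> by (intro order_tendstoD(1)) auto
  moreover have "(\<lambda>n. X0 \<omega> + Z (grid (\<Delta> n) u) \<omega>) \<longlonglongrightarrow> X0 \<omega> + Z u \<omega>"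
    using continuous_on_tendsto_compose[OF path_continuous[OF \<omega>] LIMSEQ_grid[OF \<Delta>_pos \<Delta>_lim]]
      grid_nonneg[OF \<Delta>_pos u] u by simp
  then have "eventually (\<lambda>n. X0 \<omega> + Z (grid (\<Delta> n) u) \<omega> < X0 \<omega> + Z u \<omega> + \<delta> / 2) sequentially"
    using \<delta> by (intro order_tendstoD(2)) auto
  ultimately obtain n where n: "\<Lambda>lim u - \<delta> / 2 < \<Lambda>d n u"
      "X0 \<omega> + Z (grid (\<Delta> n) u) \<omega> < X0 \<omega> + Z u \<omega> + \<delta> / 2"
    using eventually_conj eventually_happens' trivial_limit_sequentially by blast
  moreover have "\<Lambda>d n (grid (\<Delta> n) u) = \<Lambda>d n u"
    by (rule disc_solution_at_grid[OF \<Delta>_pos disc_solution u])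
  ultimately have "X0 \<omega> + Z (grid (\<Delta> n) u) \<omega> \<le> \<Lambda>d n (grid (\<Delta> n) u)"
    using \<delta>_def by linarith
  then show ?thesis using grid_hit_grid_point[OF \<Delta>_pos u \<omega>] that by blast
qed

lemma measure_hit_event_le:
  assumes t: "0 \<le> t" and h: "0 < h"
  shows "\<alpha> * measure M (hit_event (right_lim \<Lambda>lim) t) \<le> \<Lambda>lim (t + h)"
proof -
  let ?U = "\<Union>n. grid_hit (\<Delta> n) (\<Lambda>d n) (t + h)"
  have "AE \<omega> in M. \<omega> \<in> hit_event (right_lim \<Lambda>lim) t \<longrightarrow> \<omega> \<in> ?U"
    using AE_dips_below[OF h]
  proof (elim AE_mp, intro AE_I2 impI)
    fix \<omega> assume \<omega>: "\<omega> \<in> space M" and "\<omega> \<in> hit_event (right_lim \<Lambda>lim) t"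
      and dips: "\<forall>T. hit_time (\<lambda>s. X0 \<omega> + Z s \<omega> - right_lim \<Lambda>lim s) = ereal T \<longrightarrow>
        (\<exists>u. T < u \<and> u \<le> T + h \<and> X0 \<omega> + Z u \<omega> < \<Lambda>lim u)"
    then have le_t: "hit_time (\<lambda>s. X0 \<omega> + Z s \<omega> - right_lim \<Lambda>lim s) \<le> ereal t"
      unfolding hit_event_def by blast
    then obtain T where T: "0 \<le> T" "T \<le> t" "hit_time (\<lambda>s. X0 \<omega> + Z s \<omega> - right_lim \<Lambda>lim s) = ereal T"
      using hit_time_nonneg[of "\<lambda>s. X0 \<omega> + Z s \<omega> - right_lim \<Lambda>lim s"]
      by (cases "hit_time (\<lambda>s. X0 \<omega> + Z s \<omega> - right_lim \<Lambda>lim s)") auto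
    obtain u where u: "T < u" "u \<le> T + h" "X0 \<omega> + Z u \<omega> < \<Lambda>lim u" using dips T(3) by blast
    have "0 \<le> u" using T(1) u(1) by simp
    then obtain n where "\<omega> \<in> grid_hit (\<Delta> n) (\<Lambda>d n) u" using below_\<Lambda>lim_grid_hit[OF \<omega> _ u(3)] by blast
    moreover have "u \<le> t + h" using u T by simp
    ultimately show "\<omega> \<in> ?U" using grid_hit_mono by blast
  qed
  moreover have "?U \<in> sets M" using disc_solution_sets[OF \<Delta>_pos disc_solution] t h by auto
  ultimately have "measure M (hit_event (right_lim \<Lambda>lim) t) \<le> measure M ?U"
    using sets_hit_event_right_lim_\<Lambda>lim[OF t] by (intro measure_mono_AE)
  then have "\<alpha> * measure M (hit_event (right_lim \<Lambda>lim) t) \<le> \<alpha> * measure M ?U"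
    using \<alpha>_pos by simp
  also have "\<dots> = \<Lambda>lim (t + h)" using measure_UN_grid_hit t h by simp
  finally show ?thesis .
qed

lemma right_lim_eq_measure:
  assumes t: "0 \<le> t"
  shows "right_lim \<Lambda>lim t = \<alpha> * measure M (hit_event (right_lim \<Lambda>lim) t)"
proof (rule antisym)
  show "right_lim \<Lambda>lim t \<le> \<alpha> * measure M (hit_event (right_lim \<Lambda>lim) t)"
    by (rule right_lim_le_measure[OF t])
  show "\<alpha> * measure M (hit_event (right_lim \<Lambda>lim) t) \<le> right_lim \<Lambda>lim t"
    using measure_hit_event_le[OF t, of "_ - t"] by (intro le_right_limI) simp
qed

lemma MV_solution_right_lim: "MV_solution M X0 Z \<alpha> (right_lim \<Lambda>lim)"
  unfolding MV_solution_iff using sets_hit_event_right_lim_\<Lambda>lim right_lim_eq_measure by blast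

lemma minimal_le_right_lim: "0 \<le> t \<Longrightarrow> \<Lambda> t \<le> right_lim \<Lambda>lim t"
  using minimal MV_solution_right_lim unfolding MV_minimal_solution_def by blast

lemma minimal_eq_\<Lambda>lim:
  assumes t: "0 \<le> t" and cont: "isCont (ext0 (\<lambda>s. \<Lambda> s / \<alpha>)) t"
  shows "\<Lambda> t = \<Lambda>lim t"
proof -
  let ?f = "ext0 (\<lambda>s. \<Lambda> s / \<alpha>)"
  have "(?f \<longlongrightarrow> ?f t) (at_left t)"
    using cont unfolding isCont_def by (rule tendsto_mono[OF at_le[OF subset_UNIV]])
  moreover have "eventually (\<lambda>s. s < t) (at_left t)" by (auto simp: eventually_at_filter)
  then have "eventually (\<lambda>s. ?f s \<le> \<Lambda>lim t / \<alpha>) (at_left t)"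
  proof eventually_elim
    case (elim s)
    then have "0 \<le> s \<Longrightarrow> \<Lambda> s \<le> \<Lambda>lim t"
      using minimal_le_right_lim[of s] right_lim_\<Lambda>lim_le[of s t] by force
    then show ?case
      unfolding ext0_def using \<Lambda>lim_nonneg[OF t] \<alpha>_pos by (auto simp: divide_right_mono)
  qed
  ultimately have "?f t \<le> \<Lambda>lim t / \<alpha>" by (rule tendsto_upperbound) simp
  then have "\<Lambda> t \<le> \<Lambda>lim t" using t \<alpha>_pos unfolding ext0_def by (simp add: divide_le_cancel)
  then show ?thesis using \<Lambda>lim_le_minimal[OF t] by simp
qed

end

theorem theorem2p9:
  fixes M :: "'a measure" and X0 :: "'a \<Rightarrow> real" and Z :: "real \<Rightarrow> 'a \<Rightarrow> real"
    and \<alpha> :: real and \<Lambda> :: "real \<Rightarrow> real" and \<Lambda>d :: "nat \<Rightarrow> real \<Rightarrow> real"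
    and \<Delta> :: "nat \<Rightarrow> real"
  assumes "prob_space M"
    and "\<alpha> > 0"
    and "X0 \<in> borel_measurable M"
    and "\<forall>t\<ge>0. Z t \<in> borel_measurable M"
    and "\<forall>\<omega>\<in>space M. continuous_on {0..} (\<lambda>t. Z t \<omega>)"
    and "\<forall>\<omega>\<in>space M. Z 0 \<omega> = 0"
    and "prob_space.indep_set M
           (sigma_sets (space M) {X0 -` B \<inter> space M | B. B \<in> sets borel})
           (sigma_sets (space M) {Z t -` B \<inter> space M | t B. 0 \<le> t \<and> B \<in> sets borel})"
    and "crossing_property M X0 Z"
    and "MV_minimal_solution M X0 Z \<alpha> \<Lambda>"
    and "\<forall>n. \<Delta> n > 0"
    and "\<forall>n. MV_disc_minimal_solution M X0 Z \<alpha> (\<Delta> n) (\<Lambda>d n)"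
    and "\<forall>n. {\<Delta> n * real k | k. k \<in> (UNIV :: nat set)} \<subseteq> {\<Delta> (Suc n) * real k | k. k \<in> (UNIV :: nat set)}"
    and "\<Delta> \<longlonglongrightarrow> 0"
    and "(\<forall>x. measure M {\<omega>\<in>space M. X0 \<omega> = x} = 0) \<or>
         (\<forall>t>0. \<forall>x. measure M {\<omega>\<in>space M. Z t \<omega> = x} = 0)"
  shows "\<forall>t\<ge>0. isCont (ext0 (\<lambda>s. \<Lambda> s / \<alpha>)) t \<longrightarrow>
           (\<lambda>n. \<Lambda>d n t / \<alpha>) \<longlonglongrightarrow> \<Lambda> t / \<alpha>"
proof -
  interpret mv_discretisation M X0 Z \<alpha> \<Lambda> \<Lambda>d \<Delta>
  proof (intro mv_discretisation.intro mv_setting.intro mv_discretisation_axioms.intro mv_setting_axioms.intro)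
    show "prob_space M" by (rule assms(1))
  qed (use assms in auto)
  show ?thesis
  proof (intro allI impI)
    fix t :: real assume t: "0 \<le> t" and "isCont (ext0 (\<lambda>s. \<Lambda> s / \<alpha>)) t"
    then have "\<Lambda> t = \<Lambda>lim t" by (rule minimal_eq_\<Lambda>lim)
    then show "(\<lambda>n. \<Lambda>d n t / \<alpha>) \<longlonglongrightarrow> \<Lambda> t / \<alpha>"
      using LIMSEQ_\<Lambda>lim[OF t] \<alpha>_pos by (auto intro!: tendsto_divide tendsto_const)
  qed
qed

end
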